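(* Under the setting and hypotheses of the following result — namely, $\mathbb P[\mathbf s_{1,\ldots,N}\in\mathbb S\mid\mathbf s_0,\boldsymbol\pi^0]\ge S_0\ge S$ and, for every $k\in\{1,\ldots,N-1\}$ and every $\mathbf s_k\in\mathbb S$, $\mathbb P[\mathbf s_{k+1,\ldots,N}\in\mathbb S\mid\mathbf s_k,\boldsymbol\pi^k]\ge\gamma_k\,\mathbb P[\mathbf s_{k+1,\ldots,N}\in\mathbb S\mid\mathbf s_k,\boldsymbol\pi^{k-1}]$ with $\gamma_k\in(0,1]$ — if moreover the factors are chosen so that $\big(\prod_{k=1}^{N-1}\gamma_k\big)S_0=S$, then the closed-loop policy sequence $\{\boldsymbol\pi^0_0,\ldots,\boldsymbol\pi^{N-1}_{N-1}\}$ satisfies $$\mathbb P\big[\mathbf s_{1,\ldots,N}\in\mathbb S\mid\mathbf s_0,\{\boldsymbol\pi^0_0,\ldots,\boldsymbol\pi^{N-1}_{N-1}\}\big]\ge S.$$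
   Context: States $\mathbf s_k\in\mathbb R^n$ evolve as a controlled Markov chain with transition density $\rho[\mathbf s_+\mid\mathbf s,\mathbf u]$; $\mathbb S\subset\mathbb R^n$ is measurable, $\mathbf s_0\in\mathbb S$, $N\in\mathbb N$, $S\in[0,1]$. For each $k\in\{0,\ldots,N-1\}$, $\boldsymbol\pi^k=\{\boldsymbol\pi^k_k,\ldots,\boldsymbol\pi^k_{N-1}\}$ is a policy sequence of measurable maps $\mathbf s\mapsto\mathbf u$ for times $k,\ldots,N-1$; the closed loop applies $\mathbf u_k=\boldsymbol\pi^k_k(\mathbf s_k)$. The notation $\mathbf s_{a,\ldots,b}\in\mathbb S$ means $\mathbf s_j\in\mathbb S$ for $j=a,\ldots,b$. $\mathbb P[\mathbf s_{1,\ldots,N}\in\mathbb S\mid\mathbf s_0,\cdot]$ is the mission-wide probability of safety; $\mathbb P[\mathbf s_{k+1,\ldots,N}\in\mathbb S\mid\mathbf s_k,\cdot]$ is the remaining mission-wide probability of safety from state $\mathbf s_k$ at time $k$ under the given policy components at times $k,\ldots,N-1$. *)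

theory Defs
  imports "HOL-Analysis.Analysis"
begin

text \<open>Remaining safety probability.  rho s' s u is the transition density of s' given
  state s and input u (w.r.t. Lebesgue measure); pol j is the policy component used at
  time j.  safe_aux rho SS pol m k s is the probability that the next m states
  s_{k+1},...,s_{k+m} all lie in SS, given s_k = s, where the input at time j is pol j s_j.
  It is defined by the Markov property (Chapman-Kolmogorov recursion).\<close>
primrec safe_aux ::
  "('s::euclidean_space \<Rightarrow> 's \<Rightarrow> 'u \<Rightarrow> ennreal) \<Rightarrow> 's set \<Rightarrow> (nat \<Rightarrow> 's \<Rightarrow> 'u)
    \<Rightarrow> nat \<Rightarrow> nat \<Rightarrow> 's \<Rightarrow> ennreal" where
  "safe_aux rho SS pol 0 k s = 1"
| "safe_aux rho SS pol (Suc m) k s =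
     (\<integral>\<^sup>+ s'. rho s' s (pol k s) * indicator SS s' * safe_aux rho SS pol m (Suc k) s' \<partial>lborel)"

text \<open>P[s_{k+1,...,N} in SS | s_k = s, pol_k, ..., pol_{N-1}].\<close>
definition safe_prob ::
  "('s::euclidean_space \<Rightarrow> 's \<Rightarrow> 'u \<Rightarrow> ennreal) \<Rightarrow> 's set \<Rightarrow> (nat \<Rightarrow> 's \<Rightarrow> 'u)
    \<Rightarrow> nat \<Rightarrow> nat \<Rightarrow> 's \<Rightarrow> ennreal" where
  "safe_prob rho SS pol N k s = safe_aux rho SS pol (N - k) k s"

end

theory Submission
  imports Defs
begin

text \<open>Let \<open>\<sigma>\<^sub>k\<close> be the policy that follows the closed loop \<open>\<pi>\<^sup>j\<^sub>j\<close> up to time \<open>k - 1\<close>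
  and \<open>\<pi>\<^sup>k\<close> from time \<open>k\<close> on, so that \<open>\<sigma>\<^sub>0 = \<pi>\<^sup>0\<close> and \<open>\<sigma>\<^sub>N\<^sub>-\<^sub>1\<close> is the closed loop.
  Since \<open>\<sigma>\<^sub>k\<close> and \<open>\<sigma>\<^sub>k\<^sub>+\<^sub>1\<close> coincide before time \<open>k + 1\<close>, and the remaining safety
  probability is obtained by iterated integration against nonnegative kernels, the
  pointwise bound \<open>P[\<dots> | s\<^sub>k\<^sub>+\<^sub>1, \<pi>\<^sup>k\<^sup>+\<^sup>1] \<ge> \<gamma>\<^sub>k\<^sub>+\<^sub>1 P[\<dots> | s\<^sub>k\<^sub>+\<^sub>1, \<pi>\<^sup>k]\<close> on the safe set
  propagates back to time 0. By induction, the mission-wide safety of \<open>\<sigma>\<^sub>k\<close> is at least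
  \<open>\<gamma>\<^sub>1 \<cdots> \<gamma>\<^sub>k S\<^sub>0\<close>.\<close>

text \<open>No measurability of \<open>f\<close> is needed: the remaining safety probabilities are not
  known to be measurable.\<close>
lemma nn_integral_cmult_le:
  "c * integral\<^sup>N M f \<le> (\<integral>\<^sup>+ x. c * f x \<partial>M)"
proof -
  have "c * integral\<^sup>N M f = (SUP g \<in> {g. simple_function M g \<and> g \<le> f}. c * integral\<^sup>S M g)"
    unfolding nn_integral_def by (simp add: SUP_mult_left_ennreal)
  also have "\<dots> \<le> (\<integral>\<^sup>+ x. c * f x \<partial>M)"
  proof (rule SUP_least)
    fix g assume g: "g \<in> {g. simple_function M g \<and> g \<le> f}"
    then have "c * integral\<^sup>S M g = integral\<^sup>N M (\<lambda>x. c * g x)"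
      by (simp add: nn_integral_eq_simple_integral)
    also have "\<dots> \<le> (\<integral>\<^sup>+ x. c * f x \<partial>M)"
      using g by (intro nn_integral_mono) (auto simp: le_fun_def intro: mult_left_mono)
    finally show "c * integral\<^sup>S M g \<le> (\<integral>\<^sup>+ x. c * f x \<partial>M)" .
  qed
  finally show ?thesis .
qed

lemma safe_aux_cong:
  assumes "\<And>j. k \<le> j \<Longrightarrow> j < k + m \<Longrightarrow> pol j = pol' j"
  shows "safe_aux rho SS pol m k s = safe_aux rho SS pol' m k s"
  using assms
proof (induction m arbitrary: k s)
  case 0
  then show ?case by simp
next
  case (Suc m)
  have "pol k = pol' k"
    using Suc.prems by simp
  moreover have "\<And>s'. safe_aux rho SS pol m (Suc k) s' = safe_aux rho SS pol' m (Suc k) s'"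
    using Suc.prems by (intro Suc.IH) auto
  ultimately show ?case by simp
qed

lemma cmult_safe_aux_le_backward:
  assumes agree: "\<And>i. k \<le> i \<Longrightarrow> i < k + j \<Longrightarrow> pol i = pol' i"
    and later: "\<And>s. s \<in> SS \<Longrightarrow>
      c * safe_aux rho SS pol m (k + j) s \<le> safe_aux rho SS pol' m (k + j) s"
    and "s \<in> SS"
  shows "c * safe_aux rho SS pol (j + m) k s \<le> safe_aux rho SS pol' (j + m) k s"
  using assms
proof (induction j arbitrary: k s)
  case 0
  then show ?case by simp
next
  case (Suc j)
  let ?V = "safe_aux rho SS pol (j + m) (Suc k)"
  let ?V' = "safe_aux rho SS pol' (j + m) (Suc k)"
  have same_input: "pol k = pol' k"
    using Suc.prems(1) by simp
  have IH: "c * ?V s' \<le> ?V' s'" if "s' \<in> SS" for s'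
    using Suc.prems(1,2) that by (intro Suc.IH) auto
  have "c * safe_aux rho SS pol (Suc j + m) k s
      \<le> (\<integral>\<^sup>+ s'. c * (rho s' s (pol k s) * indicator SS s' * ?V s') \<partial>lborel)"
    by (simp add: nn_integral_cmult_le)
  also have "\<dots> \<le> (\<integral>\<^sup>+ s'. rho s' s (pol' k s) * indicator SS s' * ?V' s' \<partial>lborel)"
  proof (rule nn_integral_mono)
    fix s'
    show "c * (rho s' s (pol k s) * indicator SS s' * ?V s')
        \<le> rho s' s (pol' k s) * indicator SS s' * ?V' s'"
    proof (cases "s' \<in> SS")
      case True
      have "c * (rho s' s (pol k s) * indicator SS s' * ?V s') = rho s' s (pol' k s) * (c * ?V s')"
        using True same_input by (simp add: ac_simps)
      also have "\<dots> \<le> rho s' s (pol' k s) * ?V' s'"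
        using IH[OF True] by (rule mult_left_mono) simp
      finally show ?thesis
        using True by simp
    qed simp
  qed
  finally show ?case by simp
qed

definition switched_policy :: "(nat \<Rightarrow> nat \<Rightarrow> 's \<Rightarrow> 'u) \<Rightarrow> nat \<Rightarrow> nat \<Rightarrow> 's \<Rightarrow> 'u" where
  "switched_policy pol k j = (if j < k then pol j j else pol k j)"

lemma safe_prob_switched_policy_ge:
  fixes \<gamma> :: "nat \<Rightarrow> ennreal"
  assumes "s0 \<in> SS"
    and init: "S0 \<le> safe_prob rho SS (pol 0) N 0 s0"
    and recursive: "\<And>k s. k \<in> {1..<N} \<Longrightarrow> s \<in> SS \<Longrightarrow>
        \<gamma> k * safe_prob rho SS (pol (k - 1)) N k s \<le> safe_prob rho SS (pol k) N k s"
    and "k < N"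
  shows "(\<Prod>i\<in>{1..k}. \<gamma> i) * S0 \<le> safe_prob rho SS (switched_policy pol k) N 0 s0"
  using \<open>k < N\<close>
proof (induction k)
  case 0
  have "switched_policy pol 0 = pol 0"
    by (auto simp: switched_policy_def)
  then show ?case
    using init by simp
next
  case (Suc k)
  have "Suc k \<in> {1..<N}"
    using Suc.prems by simp
  have step_k: "\<gamma> (Suc k) * safe_aux rho SS (switched_policy pol k) (N - Suc k) (0 + Suc k) s
      \<le> safe_aux rho SS (switched_policy pol (Suc k)) (N - Suc k) (0 + Suc k) s"
    if "s \<in> SS" for s
  proof -
    have "safe_aux rho SS (switched_policy pol k) (N - Suc k) (Suc k) s
        = safe_prob rho SS (pol k) N (Suc k) s"
      unfolding safe_prob_def by (rule safe_aux_cong) (auto simp: switched_policy_def)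
    moreover have "safe_aux rho SS (switched_policy pol (Suc k)) (N - Suc k) (Suc k) s
        = safe_prob rho SS (pol (Suc k)) N (Suc k) s"
      unfolding safe_prob_def by (rule safe_aux_cong) (auto simp: switched_policy_def)
    ultimately show ?thesis
      using recursive[OF \<open>Suc k \<in> {1..<N}\<close> that] by simp
  qed
  have "\<gamma> (Suc k) * safe_aux rho SS (switched_policy pol k) (Suc k + (N - Suc k)) 0 s0
      \<le> safe_aux rho SS (switched_policy pol (Suc k)) (Suc k + (N - Suc k)) 0 s0"
    by (rule cmult_safe_aux_le_backward[OF _ step_k \<open>s0 \<in> SS\<close>])
      (auto simp: switched_policy_def less_Suc_eq)
  moreover have "Suc k + (N - Suc k) = N"
    using Suc.prems by simp
  ultimately have step: "\<gamma> (Suc k) * safe_prob rho SS (switched_policy pol k) N 0 s0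
      \<le> safe_prob rho SS (switched_policy pol (Suc k)) N 0 s0"
    by (simp add: safe_prob_def)
  have "(\<Prod>i\<in>{1..Suc k}. \<gamma> i) * S0 = \<gamma> (Suc k) * ((\<Prod>i\<in>{1..k}. \<gamma> i) * S0)"
    by (simp add: ac_simps)
  also have "\<dots> \<le> \<gamma> (Suc k) * safe_prob rho SS (switched_policy pol k) N 0 s0"
    using Suc by (intro mult_left_mono) simp_all
  finally show ?case
    using step by (rule order_trans)
qed

theorem corollary1:
  fixes rho :: "real^'n \<Rightarrow> real^'n \<Rightarrow> real^'m \<Rightarrow> ennreal"
    and SS :: "(real^'n) set"
    and Pi :: "nat \<Rightarrow> nat \<Rightarrow> real^'n \<Rightarrow> real^'m"
    and s0 :: "real^'n"
    and N :: nat
    and S S0 :: real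
    and \<gamma> :: "nat \<Rightarrow> real"
  assumes rho_meas: "(\<lambda>(s', s, u). rho s' s u) \<in> borel_measurable borel"
    and rho_density: "\<And>s u. (\<integral>\<^sup>+ s'. rho s' s u \<partial>lborel) = 1"
    and SS_meas: "SS \<in> sets borel"
    and pol_meas: "\<And>k j. Pi k j \<in> borel_measurable borel"
    and s0_in: "s0 \<in> SS"
    and S_range: "0 \<le> S" "S \<le> 1"
    and init: "ennreal S0 \<le> safe_prob rho SS (Pi 0) N 0 s0"
    and S0_ge: "S \<le> S0"
    and gamma_range: "\<And>k. k \<in> {1..<N} \<Longrightarrow> 0 < \<gamma> k \<and> \<gamma> k \<le> 1"
    and recursive: "\<And>k s. k \<in> {1..<N} \<Longrightarrow> s \<in> SS \<Longrightarrow>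
        safe_prob rho SS (Pi k) N k s \<ge> ennreal (\<gamma> k) * safe_prob rho SS (Pi (k - 1)) N k s"
    and gamma_prod: "(\<Prod>k\<in>{1..<N}. \<gamma> k) * S0 = S"
  shows "ennreal S \<le> safe_prob rho SS (\<lambda>j. Pi j j) N 0 s0"
proof (cases N)
  case 0
  then show ?thesis
    using S_range by (simp add: safe_prob_def)
next
  case (Suc M)
  have "{1..M} = {1..<N}"
    using Suc by auto
  moreover have "(\<Prod>i\<in>{1..<N}. ennreal (\<gamma> i)) = ennreal (\<Prod>i\<in>{1..<N}. \<gamma> i)"
    using gamma_range by (intro prod_ennreal) (simp add: less_imp_le)
  moreover have "0 \<le> (\<Prod>i\<in>{1..<N}. \<gamma> i)"
    using gamma_range by (intro prod_nonneg) (simp add: less_imp_le)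
  ultimately have "ennreal S = (\<Prod>i\<in>{1..M}. ennreal (\<gamma> i)) * ennreal S0"
    using gamma_prod by (metis ennreal_mult')
  also have "\<dots> \<le> safe_prob rho SS (switched_policy Pi M) N 0 s0"
    using s0_in init recursive Suc by (intro safe_prob_switched_policy_ge) auto
  also have "\<dots> = safe_prob rho SS (\<lambda>j. Pi j j) N 0 s0"
    unfolding safe_prob_def using Suc
    by (intro safe_aux_cong) (auto simp: switched_policy_def less_Suc_eq)
  finally show ?thesis .
qed

end
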